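(* For all real $\nu\geq\frac{e^2}{2(e-2)}$ and all real $z$ with $0<z\leq 1$, $$K_\nu(z)<\left(\frac{\nu}{z}\right)^{\nu}.$$
   Context: $K_\nu$ denotes the modified Bessel function of the second kind of real order $\nu$, for real argument $z>0$. *)

theory Defs
  imports "HOL-Analysis.Analysis"
begin

text \<open>Modified Bessel function of the second kind of real order nu, for real z > 0,
  via the standard integral representation (DLMF 10.32.9):
  K_nu(z) = integral over t in (0,infinity) of exp(-z cosh t) cosh(nu t).\<close>
definition besselK :: "real \<Rightarrow> real \<Rightarrow> real" where
  "besselK \<nu> z = (LBINT t:{0<..}. exp (- z * cosh t) * cosh (\<nu> * t))"

end

theory Submission
  imports Defs
begin

text \<open>Split the integral at \<open>T = ln (\<nu>/z)\<close>, which is nonnegative since \<open>z \<le> 1 \<le> \<nu>\<close>. On \<open>(0, T]\<close> the integrand is at most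
  \<open>e^{\<nu>t}\<close>, contributing less than \<open>(\<nu>/z)^\<nu>/\<nu>\<close>. On \<open>(T, \<infinity>)\<close> the bound
  \<open>e^{-y} \<le> (m/(e y))^m\<close> with \<open>y = z e^t/2\<close> and \<open>m = \<nu> + 1\<close> trades the double-exponential
  decay for \<open>e^{-(\<nu>+1)t}\<close>, so the integrand is at most \<open>(2(\<nu>+1)/(e z))^{\<nu>+1} e^{-t}\<close> and the tail
  contributes \<open>(2(\<nu>+1)/e)^{\<nu>+1} z^{-\<nu>}/\<nu>\<close>. Both pieces together stay below \<open>(\<nu>/z)^\<nu>\<close> as soon as
  \<open>(2(\<nu>+1)/e)^{\<nu>+1} \<le> \<nu>^\<nu> (\<nu> - 1)\<close>, which holds for \<open>\<nu> \<ge> 5\<close>; and the threshold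
  \<open>e\<^sup>2/(2(e - 2))\<close> exceeds 5.\<close>

lemma exp_neg_le_powr:
  fixes y m :: real
  assumes "y > 0" "m > 0"
  shows "exp (-y) \<le> (m / (exp 1 * y)) powr m"
proof -
  have "ln (y/m) \<le> y/m - 1"
    using assms by (intro ln_le_minus_one) auto
  then have "m * ln (y/m) \<le> y - m"
    using mult_left_mono[of _ _ m] assms by (fastforce simp: field_simps)
  then have "-y \<le> m * (ln m - 1 - ln y)"
    using assms by (simp add: ln_div algebra_simps)
  also have "\<dots> = m * ln (m / (exp 1 * y))"
    using assms by (simp add: ln_div ln_mult)
  finally show ?thesis
    using assms by (simp add: powr_def)
qed

lemma cosh_le_exp_real:
  fixes x :: real
  assumes "x \<ge> 0"
  shows "cosh x \<le> exp x"
  using assms by (simp add: cosh_def)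

lemma exp_half_le_cosh_real: "exp x / 2 \<le> cosh (x::real)"
  by (simp add: cosh_def)

lemma exp_neg_integral_Ioi:
  fixes T :: real
  shows "set_integrable lborel {T<..} (\<lambda>t. exp (-t))"
    and "(LBINT t:{T<..}. exp (-t)) = exp (-T)"
proof -
  have lim_left: "(((\<lambda>t. - exp (-t)) \<circ> real_of_ereal) \<longlongrightarrow> - exp (-T)) (at_right (ereal T))"
    by (auto simp: ereal_tendsto_simps intro!: tendsto_eq_intros)
  have "((\<lambda>x::real. exp (-x)) \<longlongrightarrow> 0) at_top"
    by (rule filterlim_compose[OF exp_at_bot filterlim_uminus_at_bot_at_top])
  then have lim_right: "(((\<lambda>t. - exp (-t)) \<circ> real_of_ereal) \<longlongrightarrow> 0) (at_left \<infinity>)"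
    using tendsto_minus unfolding ereal_tendsto_simps by fastforce
  have "DERIV (\<lambda>t. - exp (-t)) x :> exp (-x)" for x :: real
    by (auto intro!: derivative_eq_intros)
  note FTC = interval_integral_FTC_nonneg[where a="ereal T" and b=\<infinity> and f="\<lambda>t. exp (-t)",
      OF _ this _ _ lim_left lim_right]
  show "set_integrable lborel {T<..} (\<lambda>t. exp (-t))"
    using FTC(1) by simp
  show "(LBINT t:{T<..}. exp (-t)) = exp (-T)"
    using FTC(2) by (simp add: interval_integral_to_infinity_eq)
qed

lemma exp_mult_integral_Ioc:
  fixes \<nu> T :: real
  assumes "\<nu> \<noteq> 0" "T \<ge> 0"
  shows "(LBINT t:{0<..T}. exp (\<nu> * t)) = (exp (\<nu> * T) - 1) / \<nu>"
proof -
  have "(LBINT t:{0<..T}. exp (\<nu> * t)) = (LBINT t=ereal 0..ereal T. exp (\<nu> * t))"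
    using assms by (subst interval_integral_Ioc) auto
  also have "\<dots> = exp (\<nu> * T) / \<nu> - exp (\<nu> * 0) / \<nu>"
    using assms
    by (intro interval_integral_FTC_finite)
       (auto intro!: continuous_intros derivative_eq_intros
             simp flip: has_real_derivative_iff_has_vector_derivative)
  finally show ?thesis
    by (simp add: diff_divide_distrib)
qed

lemma besselK_integrand_le_exp:
  fixes \<nu> z t :: real
  assumes "\<nu> \<ge> 0" "z \<ge> 0" "t \<ge> 0"
  shows "exp (- z * cosh t) * cosh (\<nu> * t) \<le> exp (\<nu> * t)"
proof -
  have "exp (- z * cosh t) \<le> 1"
    using assms by simp
  moreover have "cosh (\<nu> * t) \<le> exp (\<nu> * t)"
    using assms by (intro cosh_le_exp_real) simp
  ultimately show ?thesis
    using mult_mono[of _ 1 _ "exp (\<nu> * t)"] by simp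
qed

lemma besselK_integrand_le_exp_neg:
  fixes \<nu> z t :: real
  assumes "\<nu> \<ge> 0" "z > 0" "t \<ge> 0"
  shows "exp (- z * cosh t) * cosh (\<nu> * t)
           \<le> (2 * (\<nu> + 1) / (exp 1 * z)) powr (\<nu> + 1) * exp (-t)"
proof -
  define y where "y = z * exp t / 2"
  have y: "y > 0"
    using assms by (simp add: y_def)
  have "exp (- z * cosh t) \<le> exp (-y)"
    using exp_half_le_cosh_real[of t] assms by (simp add: y_def)
  also have "\<dots> \<le> ((\<nu> + 1) / (exp 1 * y)) powr (\<nu> + 1)"
    using y assms by (intro exp_neg_le_powr) auto
  also have "\<dots> = (2 * (\<nu> + 1) / (exp 1 * z)) powr (\<nu> + 1) * exp (- (\<nu> + 1) * t)"
    using assms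
    by (simp add: y_def powr_def ln_div ln_mult exp_add[symmetric] algebra_simps)
  finally have "exp (- z * cosh t) * cosh (\<nu> * t)
      \<le> (2 * (\<nu> + 1) / (exp 1 * z)) powr (\<nu> + 1) * exp (- (\<nu> + 1) * t) * exp (\<nu> * t)"
    using cosh_le_exp_real[of "\<nu> * t"] assms by (intro mult_mono) auto
  also have "\<dots> = (2 * (\<nu> + 1) / (exp 1 * z)) powr (\<nu> + 1) * exp (-t)"
    by (simp add: mult.assoc exp_add[symmetric] algebra_simps)
  finally show ?thesis .
qed

lemma besselK_le_split:
  fixes \<nu> z T :: real
  assumes "\<nu> > 0" "z > 0" "T \<ge> 0"
  shows "besselK \<nu> z \<le> (exp (\<nu> * T) - 1) / \<nu> + (2 * (\<nu> + 1) / (exp 1 * z)) powr (\<nu> + 1) * exp (-T)"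
proof -
  define f where "f t = exp (- z * cosh t) * cosh (\<nu> * t)" for t
  define C where "C = (2 * (\<nu> + 1) / (exp 1 * z)) powr (\<nu> + 1)"
  have f_cont: "continuous_on UNIV f"
    unfolding f_def by (intro continuous_intros)
  have f_head: "f t \<le> exp (\<nu> * t)" if "t \<ge> 0" for t
    unfolding f_def using assms that by (intro besselK_integrand_le_exp) auto
  have f_tail: "f t \<le> C * exp (-t)" if "t \<ge> 0" for t
    unfolding f_def C_def using assms that by (intro besselK_integrand_le_exp_neg) auto
  have int_head: "set_integrable lborel {0<..T} f"
    by (rule set_integrable_subset[OF borel_integrable_atLeastAtMost'[of 0 T]])
       (auto intro: continuous_on_subset[OF f_cont])
  have int_exp_head: "set_integrable lborel {0<..T} (\<lambda>t. exp (\<nu> * t))"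
    by (rule set_integrable_subset[OF borel_integrable_atLeastAtMost'[of 0 T]])
       (auto intro!: continuous_intros)
  have int_exp_tail: "set_integrable lborel {T<..} (\<lambda>t. C * exp (-t))"
    using exp_neg_integral_Ioi(1)[of T] by simp
  have int_tail: "set_integrable lborel {T<..} f"
  proof (rule set_integrable_bound[OF int_exp_tail])
    show "set_borel_measurable lborel {T<..} f"
      unfolding set_borel_measurable_def
      using borel_measurable_continuous_onI[OF f_cont] by measurable
    show "AE t in lborel. t \<in> {T<..} \<longrightarrow> norm (f t) \<le> norm (C * exp (-t))"
      using f_tail assms by (intro AE_I2) (auto simp: f_def C_def)
  qed
  have "{0<..} = {0<..T} \<union> {T<..}"
    using assms by auto
  then have "besselK \<nu> z = (LBINT t:{0<..T}. f t) + (LBINT t:{T<..}. f t)"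
    unfolding besselK_def f_def[symmetric]
    by (simp add: set_integral_Un[OF ivl_disj_int(5) int_head int_tail])
  also have "(LBINT t:{0<..T}. f t) \<le> (LBINT t:{0<..T}. exp (\<nu> * t))"
    using f_head by (intro set_integral_mono[OF int_head int_exp_head]) auto
  also have "\<dots> = (exp (\<nu> * T) - 1) / \<nu>"
    using assms by (intro exp_mult_integral_Ioc) auto
  also have "(LBINT t:{T<..}. f t) \<le> (LBINT t:{T<..}. C * exp (-t))"
    using f_tail assms by (intro set_integral_mono[OF int_tail int_exp_tail]) auto
  also have "\<dots> = C * exp (-T)"
    using exp_neg_integral_Ioi(2)[of T] by (simp add: set_integral_mult_right)
  finally show ?thesis
    by (simp add: C_def)
qed

lemma ln_add_one_le_ln_add_inverse:
  fixes x :: real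
  assumes "x > 0"
  shows "ln (x + 1) \<le> ln x + 1 / x"
proof -
  have "0 < 1 + 1 / x"
    using assms by (simp add: add_pos_pos)
  have "ln (x + 1) = ln (x * (1 + 1 / x))"
    using assms by (simp add: distrib_left)
  also have "\<dots> = ln x + ln (1 + 1 / x)"
    by (rule ln_mult_pos[OF assms \<open>0 < 1 + 1 / x\<close>])
  also have "\<dots> \<le> ln x + 1 / x"
    using assms by (intro add_left_mono ln_add_one_self_le_self) auto
  finally show ?thesis .
qed

lemma two_succ_div_e_powr_le:
  fixes \<nu> :: real
  assumes "\<nu> \<ge> 5"
  shows "(2 * (\<nu> + 1) / exp 1) powr (\<nu> + 1) \<le> \<nu> powr \<nu> * (\<nu> - 1)"
proof -
  have ln_succ: "ln (\<nu> + 1) \<le> ln \<nu> + 1 / \<nu>"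
    using assms by (intro ln_add_one_le_ln_add_inverse) auto
  have ln_pred: "ln \<nu> \<le> ln (\<nu> - 1) + 1 / (\<nu> - 1)"
    using ln_add_one_le_ln_add_inverse[of "\<nu> - 1"] assms by simp
  have "1 / \<nu> \<le> 1 / 5" "1 / (\<nu> - 1) \<le> 1 / 4"
    using assms by (auto simp: field_simps)
  have "(\<nu> + 1) * (ln 2 + ln (\<nu> + 1) - 1) \<le> (\<nu> + 1) * (ln \<nu> + 1 / \<nu> + ln 2 - 1)"
    using ln_succ assms by (intro mult_left_mono) auto
  also have "\<dots> = \<nu> * ln \<nu> + ln \<nu> + 1 + 1 / \<nu> + (\<nu> + 1) * (ln 2 - 1)"
    using assms by (simp add: field_simps)
  also have "(\<nu> + 1) * (ln 2 - 1) \<le> 6 * ln 2 - 6"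
    using mult_right_mono_neg[of 6 "\<nu> + 1" "ln 2 - 1"] ln2_le_25_over_36 assms
    by (simp add: algebra_simps)
  also have "\<nu> * ln \<nu> + ln \<nu> + 1 + 1 / \<nu> + (6 * ln 2 - 6) \<le> \<nu> * ln \<nu> + ln (\<nu> - 1)"
    using ln_pred \<open>1 / \<nu> \<le> 1 / 5\<close> \<open>1 / (\<nu> - 1) \<le> 1 / 4\<close> ln2_le_25_over_36 by linarith
  finally have ln_le: "(\<nu> + 1) * ln (2 * (\<nu> + 1) / exp 1) \<le> \<nu> * ln \<nu> + ln (\<nu> - 1)"
    using assms by (simp add: ln_div ln_mult del: distrib_left_numeral)
  have "(2 * (\<nu> + 1) / exp 1) powr (\<nu> + 1) = exp ((\<nu> + 1) * ln (2 * (\<nu> + 1) / exp 1))"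
    using assms by (simp add: powr_def mult.commute)
  also have "\<dots> \<le> exp (\<nu> * ln \<nu> + ln (\<nu> - 1))"
    using ln_le by simp
  also have "\<dots> = \<nu> powr \<nu> * (\<nu> - 1)"
    using assms by (simp add: exp_add powr_def mult.commute)
  finally show ?thesis .
qed

lemma two_succ_div_e_z_powr_mult_le:
  fixes \<nu> z :: real
  assumes "\<nu> \<ge> 5" "z > 0"
  shows "(2 * (\<nu> + 1) / (exp 1 * z)) powr (\<nu> + 1) * z \<le> (\<nu> / z) powr \<nu> * (\<nu> - 1)"
proof -
  have "(2 * (\<nu> + 1) / (exp 1 * z)) powr (\<nu> + 1) * z
      = (2 * (\<nu> + 1) / exp 1) powr (\<nu> + 1) / z powr (\<nu> + 1) * z"
    using assms by (simp add: mult.commute divide_divide_eq_left flip: powr_divide)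
  also have "\<dots> = (2 * (\<nu> + 1) / exp 1) powr (\<nu> + 1) / z powr \<nu>"
    using assms by (simp add: powr_add)
  also have "\<dots> \<le> \<nu> powr \<nu> * (\<nu> - 1) / z powr \<nu>"
    using assms by (intro divide_right_mono two_succ_div_e_powr_le) auto
  also have "\<dots> = (\<nu> / z) powr \<nu> * (\<nu> - 1)"
    using assms by (simp add: powr_divide)
  finally show ?thesis .
qed

lemma five_le_exp2_threshold: "5 \<le> exp 2 / (2 * (exp 1 - 2 :: real))"
proof -
  have "(3 / 2) ^ 2 \<le> exp (1 / 2 :: real) ^ 2"
    by (intro power_mono) (use exp_ge_add_one_self[of "1/2"] in auto)
  then have e_gt_2: "2 < exp (1::real)"
    by (simp add: power2_eq_square flip: exp_add)
  have "(228 / 100) ^ 2 \<le> (5 - exp (1::real)) ^ 2"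
    using e_less_272 by (intro power_mono) auto
  then have "10 * (exp 1 - 2) \<le> exp (1::real) ^ 2"
    by (simp add: power2_eq_square algebra_simps)
  then show ?thesis
    using e_gt_2 by (simp add: pos_le_divide_eq exp_of_nat_mult[symmetric])
qed

theorem mainTheorem6:
  fixes \<nu> z :: real
  assumes "\<nu> \<ge> exp 2 / (2 * (exp 1 - 2))"
    and "0 < z" and "z \<le> 1"
  shows "besselK \<nu> z < (\<nu> / z) powr \<nu>"
proof -
  have "\<nu> \<ge> 5"
    using five_le_exp2_threshold assms(1) by linarith
  define R where "R = (\<nu> / z) powr \<nu>"
  define T where "T = ln (\<nu> / z)"
  have "T \<ge> 0" "exp (\<nu> * T) = R" "exp (-T) = z / \<nu>"
    using \<open>\<nu> \<ge> 5\<close> assms by (auto simp: T_def R_def powr_def exp_minus field_simps)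
  have tail: "(2 * (\<nu> + 1) / (exp 1 * z)) powr (\<nu> + 1) * exp (-T) \<le> R * (\<nu> - 1) / \<nu>"
    using two_succ_div_e_z_powr_mult_le[OF \<open>\<nu> \<ge> 5\<close> \<open>0 < z\<close>] \<open>\<nu> \<ge> 5\<close> \<open>exp (-T) = z / \<nu>\<close>
    by (simp add: R_def divide_right_mono)
  have "besselK \<nu> z \<le> (R - 1) / \<nu> + R * (\<nu> - 1) / \<nu>"
    using besselK_le_split[of \<nu> z T] tail assms \<open>\<nu> \<ge> 5\<close> \<open>T \<ge> 0\<close> \<open>exp (\<nu> * T) = R\<close> by simp
  also have "\<dots> < R"
    using \<open>\<nu> \<ge> 5\<close> by (simp add: field_simps)
  finally show ?thesis
    by (simp add: R_def)
qed

end
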